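(* Consider a canonical game (with $m\ge1$). (i) If the action groups satisfy $S_n\le A< B\le U(n)$, then neither player has a strong winning strategy. (ii) If the action groups satisfy $S_n\le B< A\le U(n)$, then neither player has a strong winning strategy.
   Context: Setting: a quantum system in $\mathbb{C}^n$ with computational basis $\ket{0},\dots,\ket{n-1}$, initial basis state $\ket{q_0}$, and target basis states $\ket{q_A}$ (player 1) and $\ket{q_B}$ (player 2) with $\ket{q_A}\neq\ket{q_B}$. Player 1's moves come from a subgroup $A\le U(n)$ and player 2's from a subgroup $B\le U(n)$; $A<B$ means $A$ is a proper subgroup of $B$. $S_n$ denotes the symmetric group, identified with the subgroup of $U(n)$ of $n\times n$ permutation matrices. Canonical game: $2m$ rounds; a strategy of player 1 is $\sigma_1=(A_1,\dots,A_m)$, $A_i\in A$, a strategy of player 2 is $\sigma_2=(B_1,\dots,B_m)$, $B_i\in B$, and the final state $B_mA_m\cdots B_1A_1\ket{q_0}$ is measured in the computational basis; player 1 wins on outcome $\ket{q_A}$, player 2 on outcome $\ket{q_B}$. A strategy of a player is a strong winning strategy if for every strategy of the opponent that player wins with probability $1$. *)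

theory Defs
  imports "HOL-Analysis.Analysis"
begin

type_synonym 'n cmat = "complex ^'n ^'n"
type_synonym 'n cvec = "complex ^'n"

definition adj :: "'n::finite cmat \<Rightarrow> 'n cmat" where
  "adj U = (\<chi> i j. cnj (U $ j $ i))"

text \<open>The unitary group U(n), with n = CARD('n).\<close>
definition unitary_group :: "'n::finite cmat set" where
  "unitary_group = {U. U ** adj U = mat 1 \<and> adj U ** U = mat 1}"

text \<open>Subgroup of U(n): contains identity, closed under product and inverse
  (the inverse of a unitary matrix is its conjugate transpose).\<close>
definition subgroup_U :: "'n::finite cmat set \<Rightarrow> bool" where
  "subgroup_U G \<longleftrightarrow> G \<subseteq> unitary_group \<and> mat 1 \<in> G \<and>
     (\<forall>X\<in>G. \<forall>Y\<in>G. X ** Y \<in> G) \<and> (\<forall>X\<in>G. adj X \<in> G)"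

definition proper_subgroup_U :: "'n::finite cmat set \<Rightarrow> 'n cmat set \<Rightarrow> bool" where
  "proper_subgroup_U A B \<longleftrightarrow> subgroup_U A \<and> subgroup_U B \<and> A \<subset> B"

definition perm_matrix :: "('n::finite \<Rightarrow> 'n) \<Rightarrow> 'n cmat" where
  "perm_matrix \<sigma> = (\<chi> i j. if i = \<sigma> j then 1 else 0)"

definition sym_group_mats :: "'n::finite cmat set" where
  "sym_group_mats = {perm_matrix \<sigma> | \<sigma>. \<sigma> permutes (UNIV :: 'n set)}"

definition ket :: "'n::finite \<Rightarrow> 'n cvec" where
  "ket q = (\<chi> i. if i = q then 1 else 0)"

text \<open>Final state B_m A_m ... B_1 A_1 |q0> for strategies
  sA = [A_1,...,A_m], sB = [B_1,...,B_m].\<close>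
definition final_state :: "'n::finite \<Rightarrow> 'n cmat list \<Rightarrow> 'n cmat list \<Rightarrow> 'n cvec" where
  "final_state q0 sA sB = foldl (\<lambda>v (X, Y). Y *v (X *v v)) (ket q0) (zip sA sB)"

definition outcome_prob :: "'n::finite \<Rightarrow> 'n cmat list \<Rightarrow> 'n cmat list \<Rightarrow> 'n \<Rightarrow> real" where
  "outcome_prob q0 sA sB q = (cmod (final_state q0 sA sB $ q))\<^sup>2"

text \<open>Strategy of a player with action group G in the 2m-round canonical game.\<close>
definition strategy :: "nat \<Rightarrow> 'n::finite cmat set \<Rightarrow> 'n cmat list \<Rightarrow> bool" where
  "strategy m G s \<longleftrightarrow> length s = m \<and> set s \<subseteq> G"

definition strong_winning_1 ::
  "nat \<Rightarrow> 'n::finite cmat set \<Rightarrow> 'n cmat set \<Rightarrow> 'n \<Rightarrow> 'n \<Rightarrow> 'n cmat list \<Rightarrow> bool" where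
  "strong_winning_1 m A B q0 qA s1 \<longleftrightarrow> strategy m A s1 \<and>
     (\<forall>s2. strategy m B s2 \<longrightarrow> outcome_prob q0 s1 s2 qA = 1)"

definition strong_winning_2 ::
  "nat \<Rightarrow> 'n::finite cmat set \<Rightarrow> 'n cmat set \<Rightarrow> 'n \<Rightarrow> 'n \<Rightarrow> 'n cmat list \<Rightarrow> bool" where
  "strong_winning_2 m A B q0 qB s2 \<longleftrightarrow> strategy m B s2 \<and>
     (\<forall>s1. strategy m A s1 \<longrightarrow> outcome_prob q0 s1 s2 qB = 1)"

end

theory Submission
  imports Defs
begin

text \<open>Since S_n lies in both action groups, each player can permute basis states. If player 1
  had a strong winning strategy, player 2 could play the identity until the last round and then
  swap q_A with an arbitrary basis state b; winning against every b forces the column q_0 of the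
  unitary matrix produced by player 1 to contain two entries of modulus 1, which is impossible.
  Dually, player 1 can open with a swap of q_0 and b, which forces a row of the unitary matrix
  produced by player 2 to contain two entries of modulus 1.\<close>

fun play_matrix :: "('n::finite cmat \<times> 'n cmat) list \<Rightarrow> 'n cmat" where
  "play_matrix [] = mat 1"
| "play_matrix ((X, Y) # ps) = play_matrix ps ** (Y ** X)"

lemma foldl_moves_eq_play_matrix:
  "foldl (\<lambda>v (X, Y). Y *v (X *v v)) v ps = play_matrix ps *v v"
  by (induction ps arbitrary: v) (auto simp: matrix_vector_mul_assoc)

lemma play_matrix_append: "play_matrix (ps @ qs) = play_matrix qs ** play_matrix ps"
  by (induction ps rule: play_matrix.induct) (simp_all add: matrix_mul_assoc)

lemma matrix_vector_mult_ket: "(X *v ket k) $ i = X $ i $ k"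
proof -
  have "(X *v ket k) $ i = (\<Sum>j\<in>UNIV. if j = k then X $ i $ j else 0)"
    unfolding matrix_vector_mult_def ket_def vec_lambda_beta by (intro sum.cong refl) auto
  then show ?thesis by simp
qed

lemma outcome_prob_play_matrix:
  "outcome_prob q0 sA sB q = (cmod (play_matrix (zip sA sB) $ q $ q0))\<^sup>2"
  by (simp add: outcome_prob_def final_state_def foldl_moves_eq_play_matrix matrix_vector_mult_ket)

lemma adj_matrix_mul: "adj (X ** Y) = adj Y ** adj X"
  by (simp add: adj_def matrix_matrix_mult_def vec_eq_iff mult.commute)

lemma adj_adj [simp]: "adj (adj M) = M"
  by (simp add: adj_def vec_eq_iff)

lemma mat_1_in_unitary_group: "mat 1 \<in> unitary_group"
proof -
  have "adj (mat 1 :: 'n::finite cmat) = mat 1"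
    by (simp add: adj_def mat_def vec_eq_iff)
  then show ?thesis by (simp add: unitary_group_def)
qed

lemma adj_in_unitary_group: "M \<in> unitary_group \<Longrightarrow> adj M \<in> unitary_group"
  by (simp add: unitary_group_def)

lemma matrix_mul_in_unitary_group:
  assumes "X \<in> unitary_group" "Y \<in> unitary_group"
  shows "X ** Y \<in> unitary_group"
proof -
  have "X ** adj X = mat 1" "adj X ** X = mat 1" "Y ** adj Y = mat 1" "adj Y ** Y = mat 1"
    using assms unfolding unitary_group_def by auto
  moreover have "X ** Y ** adj (X ** Y) = X ** (Y ** adj Y) ** adj X"
    and "adj (X ** Y) ** (X ** Y) = adj Y ** (adj X ** X) ** Y"
    by (simp_all only: adj_matrix_mul matrix_mul_assoc)
  ultimately show ?thesis by (simp add: unitary_group_def)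
qed

lemma play_matrix_in_unitary_group:
  "set ps \<subseteq> unitary_group \<times> unitary_group \<Longrightarrow> play_matrix ps \<in> unitary_group"
  by (induction ps rule: play_matrix.induct)
    (auto simp: mat_1_in_unitary_group matrix_mul_in_unitary_group)

lemma unitary_row_norm_sum:
  assumes "M \<in> unitary_group"
  shows "(\<Sum>j\<in>UNIV. (cmod (M $ i $ j))\<^sup>2) = 1"
proof -
  have "(M ** adj M) $ i $ i = 1"
    using assms by (simp add: unitary_group_def mat_def)
  then have "(\<Sum>j\<in>UNIV. M $ i $ j * cnj (M $ i $ j)) = 1"
    by (simp add: matrix_matrix_mult_def adj_def)
  then have "complex_of_real (\<Sum>j\<in>UNIV. (cmod (M $ i $ j))\<^sup>2) = 1"
    by (simp only: of_real_sum complex_norm_square)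
  then show ?thesis
    using of_real_eq_1_iff by blast
qed

lemma unitary_column_norm_sum:
  "M \<in> unitary_group \<Longrightarrow> (\<Sum>j\<in>UNIV. (cmod (M $ j $ i))\<^sup>2) = 1"
  using unitary_row_norm_sum[OF adj_in_unitary_group, of M i] by (simp add: adj_def)

lemma sum_nonneg_ne_1_if_two_ones:
  fixes f :: "'a::finite \<Rightarrow> real"
  assumes "\<And>j. f j \<ge> 0" "a \<noteq> b" "f a = 1" "f b = 1"
  shows "sum f UNIV \<noteq> 1"
proof -
  have "sum f {a, b} \<le> sum f UNIV"
    by (rule sum_mono2) (use assms in auto)
  moreover have "sum f {a, b} = 2" using assms by simp
  ultimately show ?thesis by linarith
qed

lemma unitary_row_unimodular_unique:
  "M \<in> unitary_group \<Longrightarrow> (cmod (M $ i $ j))\<^sup>2 = 1 \<Longrightarrow> (cmod (M $ i $ k))\<^sup>2 = 1 \<Longrightarrow> j = k"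
  using sum_nonneg_ne_1_if_two_ones[of "\<lambda>j. (cmod (M $ i $ j))\<^sup>2" j k]
    unitary_row_norm_sum[of M i] by auto

lemma unitary_column_unimodular_unique:
  "M \<in> unitary_group \<Longrightarrow> (cmod (M $ i $ k))\<^sup>2 = 1 \<Longrightarrow> (cmod (M $ j $ k))\<^sup>2 = 1 \<Longrightarrow> i = j"
  using sum_nonneg_ne_1_if_two_ones[of "\<lambda>i. (cmod (M $ i $ k))\<^sup>2" i j]
    unitary_column_norm_sum[of M k] by auto

lemma perm_matrix_mul_nth:
  assumes "\<sigma> permutes UNIV"
  shows "(perm_matrix \<sigma> ** U) $ i $ k = U $ inv \<sigma> i $ k"
proof -
  have "(perm_matrix \<sigma> ** U) $ i $ k = (\<Sum>j\<in>UNIV. if j = inv \<sigma> i then U $ j $ k else 0)"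
    unfolding matrix_matrix_mult_def perm_matrix_def vec_lambda_beta
    using permutes_inverses(1)[OF assms] permutes_inverses(2)[OF assms]
    by (intro sum.cong refl) auto
  then show ?thesis by simp
qed

lemma matrix_mul_perm_matrix_nth: "(U ** perm_matrix \<sigma>) $ i $ k = U $ i $ \<sigma> k"
proof -
  have "(U ** perm_matrix \<sigma>) $ i $ k = (\<Sum>j\<in>UNIV. if j = \<sigma> k then U $ i $ j else 0)"
    unfolding matrix_matrix_mult_def perm_matrix_def vec_lambda_beta by (intro sum.cong refl) auto
  then show ?thesis by simp
qed

lemma transpose_perm_matrix_in_sym_group_mats:
  "perm_matrix (Transposition.transpose a b) \<in> sym_group_mats"
  unfolding sym_group_mats_def using permutes_swap_id[of a UNIV b] by auto

lemma not_strong_winning_1: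
  fixes A B :: "'n::finite cmat set" and q0 qA b :: 'n
  assumes "m \<ge> 1" "b \<noteq> qA" "A \<subseteq> unitary_group" "mat 1 \<in> B" "sym_group_mats \<subseteq> B"
  shows "\<not> strong_winning_1 m A B q0 qA s1"
proof
  assume "strong_winning_1 m A B q0 qA s1"
  then have s1: "length s1 = m" "set s1 \<subseteq> A"
    and win: "\<And>s2. strategy m B s2 \<Longrightarrow> outcome_prob q0 s1 s2 qA = 1"
    unfolding strong_winning_1_def strategy_def by auto
  obtain xs X where s1_snoc: "s1 = xs @ [X]"
    using s1(1) assms(1) by (cases s1 rule: rev_exhaust) auto
  define ids :: "'n cmat list" where "ids = replicate (m - 1) (mat 1)"
  define U where "U = X ** play_matrix (zip xs ids)"
  have "set (zip xs ids) \<subseteq> set s1 \<times> {mat 1}"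
    by (auto simp: ids_def s1_snoc dest: set_zip_leftD set_zip_rightD)
  then have U: "U \<in> unitary_group"
    using s1 assms(3) mat_1_in_unitary_group unfolding U_def s1_snoc
    by (auto intro!: matrix_mul_in_unitary_group play_matrix_in_unitary_group)
  have "(cmod (U $ c $ q0))\<^sup>2 = 1" for c
  proof -
    let ?\<tau> = "Transposition.transpose qA c"
    have "strategy m B (ids @ [perm_matrix ?\<tau>])"
      using assms transpose_perm_matrix_in_sym_group_mats by (auto simp: strategy_def ids_def)
    then have "outcome_prob q0 s1 (ids @ [perm_matrix ?\<tau>]) qA = 1"
      by (rule win)
    moreover have "zip s1 (ids @ [perm_matrix ?\<tau>]) = zip xs ids @ [(X, perm_matrix ?\<tau>)]"
      using s1 by (simp add: s1_snoc ids_def)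
    ultimately have "(cmod ((perm_matrix ?\<tau> ** U) $ qA $ q0))\<^sup>2 = 1"
      by (simp add: outcome_prob_play_matrix play_matrix_append U_def matrix_mul_assoc)
    then show ?thesis by (simp add: perm_matrix_mul_nth permutes_swap_id)
  qed
  then show False
    using unitary_column_unimodular_unique[OF U, of b q0 qA] assms(2) by simp
qed

lemma not_strong_winning_2:
  fixes A B :: "'n::finite cmat set" and q0 qB b :: 'n
  assumes "m \<ge> 1" "b \<noteq> q0" "B \<subseteq> unitary_group" "mat 1 \<in> A" "sym_group_mats \<subseteq> A"
  shows "\<not> strong_winning_2 m A B q0 qB s2"
proof
  assume "strong_winning_2 m A B q0 qB s2"
  then have s2: "length s2 = m" "set s2 \<subseteq> B"
    and win: "\<And>s1. strategy m A s1 \<Longrightarrow> outcome_prob q0 s1 s2 qB = 1"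
    unfolding strong_winning_2_def strategy_def by auto
  obtain Y ys where s2_cons: "s2 = Y # ys"
    using s2(1) assms(1) by (cases s2) auto
  define ids :: "'n cmat list" where "ids = replicate (m - 1) (mat 1)"
  define M where "M = play_matrix (zip ids ys) ** Y"
  have "set (zip ids ys) \<subseteq> {mat 1} \<times> set s2"
    by (auto simp: ids_def s2_cons dest: set_zip_leftD set_zip_rightD)
  then have M: "M \<in> unitary_group"
    using s2 assms(3) mat_1_in_unitary_group unfolding M_def s2_cons
    by (auto intro!: matrix_mul_in_unitary_group play_matrix_in_unitary_group)
  have "(cmod (M $ qB $ c))\<^sup>2 = 1" for c
  proof -
    let ?\<tau> = "Transposition.transpose q0 c"
    have "strategy m A (perm_matrix ?\<tau> # ids)"
      using assms transpose_perm_matrix_in_sym_group_mats by (auto simp: strategy_def ids_def)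
    then have "outcome_prob q0 (perm_matrix ?\<tau> # ids) s2 qB = 1"
      by (rule win)
    then have "(cmod ((M ** perm_matrix ?\<tau>) $ qB $ q0))\<^sup>2 = 1"
      by (simp add: outcome_prob_play_matrix s2_cons M_def matrix_mul_assoc)
    then show ?thesis by (simp add: matrix_mul_perm_matrix_nth)
  qed
  then show False
    using unitary_row_unimodular_unique[OF M, of qB b q0] assms(2) by simp
qed

theorem theorem3:
  fixes A B :: "'n::finite cmat set" and q0 qA qB :: 'n and m :: nat
  assumes "m \<ge> 1" and "qA \<noteq> qB"
  shows "((sym_group_mats \<subseteq> A \<and> proper_subgroup_U A B) \<or>
          (sym_group_mats \<subseteq> B \<and> proper_subgroup_U B A)) \<longrightarrow>
         (\<not> (\<exists>s1. strong_winning_1 m A B q0 qA s1)) \<and>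
         (\<not> (\<exists>s2. strong_winning_2 m A B q0 qB s2))"
proof
  assume "(sym_group_mats \<subseteq> A \<and> proper_subgroup_U A B) \<or>
          (sym_group_mats \<subseteq> B \<and> proper_subgroup_U B A)"
  then have "sym_group_mats \<subseteq> A" "sym_group_mats \<subseteq> B" "subgroup_U A" "subgroup_U B"
    unfolding proper_subgroup_U_def by auto
  then have groups: "sym_group_mats \<subseteq> A" "sym_group_mats \<subseteq> B"
    "A \<subseteq> unitary_group" "B \<subseteq> unitary_group" "mat 1 \<in> A" "mat 1 \<in> B"
    unfolding subgroup_U_def by auto
  obtain b where "b \<noteq> q0"
    using assms(2) by metis
  then show "(\<not> (\<exists>s1. strong_winning_1 m A B q0 qA s1)) \<and>
      (\<not> (\<exists>s2. strong_winning_2 m A B q0 qB s2))"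
    using not_strong_winning_1[of m qB qA A B] not_strong_winning_2[of m b q0 B A]
      assms groups by auto
qed

end
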